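(* Let $G$ be a compact Hausdorff group with normalized Haar measure $m_G$, let $(\Phi,\Psi)$ be a pair of complementary Young functions both satisfying the $\Delta_2$-condition, and let $\mu\in M(G)$. Then the vector measure $\nu_{\Phi,\mu}$ is absolutely continuous with respect to $m_G$, i.e. $\lim_{m_G(A)\to0}\|\nu_{\Phi,\mu}(A)\|_\Phi=0$. Moreover, if $\mu(G)\neq0$, then $m_G$ is absolutely continuous with respect to $\nu_{\Phi,\mu}$, i.e. every $\nu_{\Phi,\mu}$-null Borel set is $m_G$-null.
   Context: $M(G)$: bounded complex Radon measures on $G$. Young function: convex $\Phi:[0,\infty]\to[0,\infty]$, $\Phi(0)=0$, $\lim_{x\to\infty}\Phi(x)=\infty$; complementary $\Psi(y)=\sup\{xy-\Phi(x):x\ge0\}$; $\Delta_2$: $\exists K,x_0>0$, $\Phi(2x)\le K\Phi(x)$ for $x\ge x_0$. $L^\Phi(G)$: Orlicz space with Luxemburg norm $\|f\|_\Phi=\inf\{k>0:\int_G\Phi(|f|/k)dm_G\le1\}$. $\mu*f(t)=\int_Gf(s^{-1}t)\,d\mu(s)$; $\nu_{\Phi,\mu}(A)=\mu*\chi_A\in L^\Phi(G)$ for Borel $A$. A Borel set $A$ is $\nu$-null if $\nu(B)=0$ for all Borel $B\subseteq A$. *)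

theory Defs
  imports "HOL-Analysis.Analysis"
begin

text \<open>Young function (finite-valued on [0,\<infinity>); values at negative arguments are irrelevant).\<close>
definition young_function :: "(real \<Rightarrow> real) \<Rightarrow> bool" where
  "young_function \<Phi> \<longleftrightarrow> convex_on {0..} \<Phi> \<and> \<Phi> 0 = 0 \<and> (\<forall>x\<ge>0. 0 \<le> \<Phi> x)
     \<and> filterlim \<Phi> at_top at_top"

definition complementary :: "(real \<Rightarrow> real) \<Rightarrow> real \<Rightarrow> ennreal" where
  "complementary \<Phi> y = (SUP x\<in>{0..}. ennreal (x * y - \<Phi> x))"

definition delta2 :: "(real \<Rightarrow> ennreal) \<Rightarrow> bool" where
  "delta2 F \<longleftrightarrow> (\<exists>K x0. K > 0 \<and> x0 > 0 \<and> (\<forall>x\<ge>x0. F (2 * x) \<le> ennreal K * F x))"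

definition luxemburg_norm :: "(real \<Rightarrow> real) \<Rightarrow> 'a measure \<Rightarrow> ('a \<Rightarrow> complex) \<Rightarrow> real" where
  "luxemburg_norm \<Phi> m f =
     Inf {k::real. k > 0 \<and> (\<integral>\<^sup>+ x. ennreal (\<Phi> (cmod (f x) / k)) \<partial>m) \<le> 1}"

definition regular_borel :: "'a::topological_space measure \<Rightarrow> bool" where
  "regular_borel M \<longleftrightarrow> sets M = sets borel
     \<and> (\<forall>A\<in>sets borel. emeasure M A = (INF U\<in>{U. open U \<and> A \<subseteq> U}. emeasure M U))
     \<and> (\<forall>U. open U \<longrightarrow> emeasure M U = (SUP K\<in>{K. compact K \<and> K \<subseteq> U}. emeasure M K))"

text \<open>Normalized Haar measure on a compact group (group written additively, not necessarily abelian).\<close>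
definition normalized_haar :: "'g::topological_group_add measure \<Rightarrow> bool" where
  "normalized_haar m \<longleftrightarrow> emeasure m (space m) = 1 \<and> regular_borel m
     \<and> (\<forall>x. \<forall>A\<in>sets borel. emeasure m ((\<lambda>y. x + y) ` A) = emeasure m A)"

text \<open>A bounded complex Radon measure mu is represented as  d mu = h dM  with M a finite
  regular Borel measure and h an M-integrable complex density.
  mu * chi_A (t) = integral of chi_A(s^{-1} t) d mu(s).\<close>
definition conv_indicator :: "'g::group_add measure \<Rightarrow> ('g \<Rightarrow> complex) \<Rightarrow> 'g set \<Rightarrow> 'g \<Rightarrow> complex" where
  "conv_indicator M h A t = (\<integral>s. indicator A (- s + t) * h s \<partial>M)"

end

theory Submission
  imports Defs
begin

(*
  Write nu = |mu| for the total variation measure density M |h|; it is finite and inner regular, and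
  |mu * chi_A (t)| <= nu {s. -s + t \<in> A}. Everything rests on the Fubini formula
      integral of nu {s. -s + t \<in> U} dm(t) = nu(G) * m(U)
  for open U, and by complementation for compact U. As G need not be second countable, the open set
  {(s, t). -s + t \<in> U} need not belong to the product sigma-algebra; the formula is obtained from
  inner regularity instead: compact pieces of the slices of an open set fit, by the tube lemma, into
  finite unions of compact-by-open rectangles contained in it.

  Absolute continuity: if m(A) is small, outer regularity gives an open U containing A with m(U)
  small. By convexity and Phi(0) = 0, Phi(|mu * chi_A| / k) <= Phi(|mu|(G) / k) / |mu|(G) *
  nu {s. -s + t \<in> U}, whose m-integral is at most Phi(|mu|(G) / k) * m(U) <= 1, so the Luxemburg
  norm of mu * chi_A is at most k.

  Converse: if m(A) > 0, choose a compact K inside A with m(K) > 0. After rotating mu so that mu(G)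
  becomes the positive real |mu(G)|, split the real part of its density into positive and negative
  parts. Where mu * chi_K vanishes, both parts give {s. -s + t \<in> K} the same mass; integrating over
  t with the Fubini formula for K gives |mu(G)| * m(K) = 0.
*)

section \<open>Inner regular measures\<close>

definition inner_regular :: "'a::topological_space measure \<Rightarrow> bool" where
  "inner_regular M \<longleftrightarrow> sets M = sets borel \<and>
     (\<forall>E\<in>sets borel. emeasure M E = (SUP K\<in>{K. compact K \<and> K \<subseteq> E}. emeasure M K))"

lemma inner_regular_sets: "inner_regular M \<Longrightarrow> sets M = sets borel"
  by (simp add: inner_regular_def)

lemma inner_regular_compact_gt:
  assumes "inner_regular M" "E \<in> sets borel" "c < emeasure M E"
  obtains K where "compact K" "K \<subseteq> E" "c < emeasure M K"
  using assms by (auto simp: inner_regular_def less_SUP_iff)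

lemma inner_regularI:
  fixes M :: "'a::topological_space measure"
  assumes sets: "sets M = sets borel"
    and approx: "\<And>E e. E \<in> sets borel \<Longrightarrow> e > 0 \<Longrightarrow>
      \<exists>K. compact K \<and> K \<subseteq> E \<and> emeasure M E \<le> emeasure M K + ennreal e"
  shows "inner_regular M"
  unfolding inner_regular_def
proof (intro conjI ballI sets antisym)
  fix E :: "'a set" assume E: "E \<in> sets borel"
  show "(SUP K\<in>{K. compact K \<and> K \<subseteq> E}. emeasure M K) \<le> emeasure M E"
    using sets E by (auto intro!: SUP_least emeasure_mono)
  show "emeasure M E \<le> (SUP K\<in>{K. compact K \<and> K \<subseteq> E}. emeasure M K)"
  proof (rule ennreal_le_epsilon)
    fix e :: real assume "0 < e"
    then obtain K where K: "compact K" "K \<subseteq> E" "emeasure M E \<le> emeasure M K + ennreal e"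
      using approx[OF E] by blast
    then have "emeasure M K \<le> (SUP K\<in>{K. compact K \<and> K \<subseteq> E}. emeasure M K)"
      by (intro SUP_upper) auto
    with K(3) show "emeasure M E \<le> (SUP K\<in>{K. compact K \<and> K \<subseteq> E}. emeasure M K) + ennreal e"
      by (meson add_right_mono order_trans)
  qed
qed

lemma inner_regular_approx:
  assumes "finite_measure M" "inner_regular M" "E \<in> sets borel" "e > 0"
  obtains K where "compact K" "K \<subseteq> E" "measure M E \<le> measure M K + e"
proof (cases "measure M E \<le> e")
  case True
  then show ?thesis by (intro that[of "{}"]) auto
next
  case False
  interpret finite_measure M by fact
  have "ennreal (measure M E - e) < emeasure M E"
    using False assms(4) by (simp add: emeasure_eq_measure ennreal_less_iff)
  then obtain K where "compact K" "K \<subseteq> E" "ennreal (measure M E - e) < emeasure M K"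
    by (rule inner_regular_compact_gt[OF assms(2,3)])
  then show ?thesis
    using False by (intro that[of K]) (auto simp: emeasure_eq_measure ennreal_less_iff)
qed

lemma regular_borel_imp_inner_regular:
  assumes "compact (UNIV :: 'a::topological_space set)" "finite_measure M" "regular_borel M"
  shows "inner_regular (M :: 'a measure)"
proof (rule inner_regularI)
  interpret finite_measure M by fact
  show sets: "sets M = sets borel"
    using assms(3) by (simp add: regular_borel_def)
  have compl: "measure M (- S) = measure M UNIV - measure M S" if "S \<in> sets borel" for S
    using finite_measure_compl[of S] that sets sets_eq_imp_space_eq[OF sets]
    by (simp add: Compl_eq_Diff_UNIV)
  fix E :: "'a set" and e :: real assume E: "E \<in> sets borel" and e: "e > 0"
  have "emeasure M (- E) < ennreal (measure M (- E) + e)"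
    unfolding emeasure_eq_measure using e by (intro ennreal_lessI) (auto intro: add_nonneg_pos)
  then obtain U where U: "open U" "- E \<subseteq> U" "emeasure M U < ennreal (measure M (- E) + e)"
    using assms(3) E unfolding regular_borel_def by (auto simp: INF_less_iff)
  \<comment> \<open>The complement of an open neighbourhood of -E is a compact subset of E.\<close>
  have "measure M U < measure M (- E) + e"
    using U(3) by (simp add: emeasure_eq_measure ennreal_less_iff)
  moreover have "measure M E = measure M UNIV - measure M (- E)"
    using compl[of "- E"] E by simp
  moreover have "measure M (- U) = measure M UNIV - measure M U"
    using compl[of U] U(1) by (simp add: borel_open)
  ultimately have "measure M E \<le> measure M (- U) + e"
    by linarith
  then have "emeasure M E \<le> emeasure M (- U) + ennreal e"
    using e by (simp add: emeasure_eq_measure ennreal_plus[symmetric] ennreal_leI del: ennreal_plus)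
  moreover have "compact (- U)"
    using U(1) assms(1) by (metis closed_Compl compact_Int_closed inf_top_left)
  ultimately show "\<exists>K. compact K \<and> K \<subseteq> E \<and> emeasure M E \<le> emeasure M K + ennreal e"
    using U(2) by blast
qed

lemma inner_regular_compact_exhaustion:
  fixes M :: "'a::t2_space measure"
  assumes "finite_measure M" "inner_regular M" "E \<in> sets borel"
  obtains L :: "nat \<Rightarrow> 'a set"
  where "incseq L" "\<And>n. compact (L n)" "\<And>n. L n \<subseteq> E" "E - (\<Union>n. L n) \<in> null_sets M"
proof -
  interpret finite_measure M by fact
  have sets: "sets M = sets borel"
    using assms(2) by (rule inner_regular_sets)
  have "\<exists>K. compact K \<and> K \<subseteq> E \<and> measure M E \<le> measure M K + 1 / Suc n" for n
    by (rule inner_regular_approx[OF assms]) auto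
  then obtain K where K: "\<And>n. compact (K n)" "\<And>n. K n \<subseteq> E"
    "\<And>n. measure M E \<le> measure M (K n) + 1 / Suc n"
    by metis
  define L where "L n = (\<Union>i\<le>n. K i)" for n
  have L: "incseq L" "compact (L n)" "L n \<subseteq> E" for n
    using K(1,2) by (auto 0 3 simp: L_def incseq_def UN_subset_iff intro: order_trans intro!: compact_UN)
  define N where "N = E - (\<Union>n. L n)"
  have N: "N \<in> sets M"
    using assms(3) L(2) sets by (auto simp: N_def compact_imp_closed borel_closed)
  have small: "measure M N \<le> 1 / Suc n" for n
  proof -
    have "measure M N \<le> measure M (E - K n)"
      using assms(3) K(1) sets by (intro finite_measure_mono) (auto simp: N_def L_def compact_imp_closed borel_closed)
    also have "\<dots> = measure M E - measure M (K n)"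
      using assms(3) K(1,2) sets by (subst finite_measure_Diff) (auto simp: Int_absorb2 compact_imp_closed borel_closed)
    finally show ?thesis
      using K(3)[of n] by simp
  qed
  have "measure M N = 0"
  proof (rule ccontr)
    assume "measure M N \<noteq> 0"
    then obtain n where "inverse (Suc n) < measure M N"
      using reals_Archimedean measure_nonneg[of M N] by (metis order_le_less)
    then show False
      using small[of n] by (simp add: inverse_eq_divide)
  qed
  then have "N \<in> null_sets M"
    using N by (simp add: emeasure_eq_measure null_sets_def)
  then show thesis
    using L by (intro that) (auto simp: N_def)
qed

lemma inner_regular_density:
  fixes M :: "'a::t2_space measure"
  assumes "finite_measure M" "inner_regular M" "g \<in> borel_measurable M"
  shows "inner_regular (density M g)"
  unfolding inner_regular_def
proof (intro conjI ballI)
  have sets: "sets M = sets borel"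
    using assms(2) by (rule inner_regular_sets)
  then show "sets (density M g) = sets borel" by simp
  fix E :: "'a set" assume E: "E \<in> sets borel"
  obtain L :: "nat \<Rightarrow> 'a set" where L: "incseq L" "\<And>n. compact (L n)" "\<And>n. L n \<subseteq> E"
    and null: "E - (\<Union>n. L n) \<in> null_sets M"
    using inner_regular_compact_exhaustion[OF assms(1,2) E] by metis
  have L_sets: "L n \<in> sets (density M g)" for n
    using L(2) sets by (simp add: compact_imp_closed borel_closed)
  have "E - (\<Union>n. L n) \<in> null_sets (density M g)"
    using null absolutely_continuousI_density[OF assms(3)] by (auto simp: absolutely_continuous_def)
  moreover have "(\<Union>n. L n) \<in> sets (density M g)" "(\<Union>n. L n) \<union> (E - (\<Union>n. L n)) = E"
    using L_sets L(3) by auto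
  ultimately have "emeasure (density M g) E = emeasure (density M g) (\<Union>n. L n)"
    using emeasure_Un_null_set by metis
  also have "\<dots> = (SUP n. emeasure (density M g) (L n))"
    using L(1) L_sets by (intro SUP_emeasure_incseq[symmetric]) auto
  also have "\<dots> \<le> (SUP K\<in>{K. compact K \<and> K \<subseteq> E}. emeasure (density M g) K)"
    using L(2,3) by (intro SUP_mono) auto
  finally show "emeasure (density M g) E = (SUP K\<in>{K. compact K \<and> K \<subseteq> E}. emeasure (density M g) K)"
    using E sets by (intro antisym) (auto intro!: SUP_least emeasure_mono)
qed

lemma finite_inner_regular_density:
  fixes M :: "'a::t2_space measure" and f :: "'a \<Rightarrow> real"
  assumes "finite_measure M" "inner_regular M" "integrable M f"
  shows "finite_measure (density M (\<lambda>s. ennreal (f s)))" "inner_regular (density M (\<lambda>s. ennreal (f s)))"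
  using assms by (auto simp: emeasure_density real_integrable_def intro!: finite_measureI inner_regular_density)

section \<open>Slice measures of open sets in a product\<close>

lemma open_slice:
  fixes W :: "('a::t2_space \<times> 'b::t2_space) set"
  assumes "open W"
  shows "open {x. (x, y) \<in> W}"
  using continuous_open_vimage[OF assms, of "\<lambda>x. (x, y)"] by (simp add: vimage_def continuous_intros)

lemma inner_regular_tube:
  fixes \<nu> :: "'a::t2_space measure" and W :: "('a \<times> 'b::t2_space) set"
  assumes "inner_regular \<nu>" "open W" "c < emeasure \<nu> {x. (x, y) \<in> W}"
  obtains D N where "compact D" "open N" "y \<in> N" "D \<times> N \<subseteq> W" "c < emeasure \<nu> D"
proof -
  obtain D where D: "compact D" "D \<subseteq> {x. (x, y) \<in> W}" "c < emeasure \<nu> D"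
    using inner_regular_compact_gt[OF assms(1) borel_open[OF open_slice[OF assms(2)]] assms(3)] by blast
  then have "D \<times> {y} \<subseteq> W" by auto
  then obtain U N where "openin euclidean N" "y \<in> N" "U \<times> N \<subseteq> W" "D \<subseteq> U"
    using tube_lemma_left[of euclidean euclidean W D y] assms(2) D(1) by (auto simp: compactin_euclidean_iff)
  then show thesis
    using D by (intro that[of D N]) auto
qed

lemma emeasure_slice_borel_measurable:
  fixes \<nu> :: "'a::t2_space measure" and W :: "('a \<times> 'b::t2_space) set"
  assumes "inner_regular \<nu>" "open W" "sets m = sets borel"
  shows "(\<lambda>y. emeasure \<nu> {x. (x, y) \<in> W}) \<in> borel_measurable m"
proof (rule borel_measurableI_greater)
  fix c
  \<comment> \<open>The slice measure is lower semicontinuous.\<close>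
  have "open {y. c < emeasure \<nu> {x. (x, y) \<in> W}}"
  proof (rule topological_space_class.openI)
    fix y assume "y \<in> {y. c < emeasure \<nu> {x. (x, y) \<in> W}}"
    then obtain D N where DN: "compact D" "open N" "y \<in> N" "D \<times> N \<subseteq> W" "c < emeasure \<nu> D"
      using inner_regular_tube[OF assms(1,2)] by blast
    have "c < emeasure \<nu> {x. (x, y') \<in> W}" if "y' \<in> N" for y'
    proof -
      have "emeasure \<nu> D \<le> emeasure \<nu> {x. (x, y') \<in> W}"
        using that DN(4) borel_open[OF open_slice[OF assms(2)]] inner_regular_sets[OF assms(1)]
        by (intro emeasure_mono) auto
      with DN(5) show ?thesis
        by order
    qed
    then show "\<exists>T. open T \<and> y \<in> T \<and> T \<subseteq> {y. c < emeasure \<nu> {x. (x, y) \<in> W}}"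
      using DN(2,3) by blast
  qed
  then have "{y. c < emeasure \<nu> {x. (x, y) \<in> W}} \<in> sets m"
    using assms(3) by (simp add: borel_open)
  then show "{y \<in> space m. c < emeasure \<nu> {x. (x, y) \<in> W}} \<in> sets m"
    using sets_eq_imp_space_eq[OF assms(3)] by simp
qed

lemma inner_regular_compact_tube:
  fixes \<nu> :: "'a::t2_space measure" and m :: "'b::t2_space measure"
  assumes "inner_regular \<nu>" "sets m = sets borel" "open W" "compact C"
    and "\<forall>y\<in>C. c < emeasure \<nu> {x. (x, y) \<in> W}"
  obtains R where "R \<in> sets (\<nu> \<Otimes>\<^sub>M m)" "R \<subseteq> W"
    "\<forall>y\<in>C. c \<le> emeasure \<nu> {x. (x, y) \<in> R}"
proof -
  have "\<forall>y\<in>C. \<exists>D N. compact D \<and> open N \<and> y \<in> N \<and> D \<times> N \<subseteq> W \<and> c < emeasure \<nu> D"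
  proof
    fix y assume y: "y \<in> C"
    obtain D N where "compact D" "open N" "y \<in> N" "D \<times> N \<subseteq> W" "c < emeasure \<nu> D"
      by (rule inner_regular_tube[OF assms(1,3) bspec[OF assms(5) y]])
    then show "\<exists>D N. compact D \<and> open N \<and> y \<in> N \<and> D \<times> N \<subseteq> W \<and> c < emeasure \<nu> D"
      by blast
  qed
  then obtain D N where DN: "\<And>y. y \<in> C \<Longrightarrow>
      compact (D y) \<and> open (N y) \<and> y \<in> N y \<and> D y \<times> N y \<subseteq> W \<and> c < emeasure \<nu> (D y)"
    by metis
  have "C \<subseteq> (\<Union>y\<in>C. N y)"
    using DN by auto
  then obtain T where T: "T \<subseteq> C" "finite T" "C \<subseteq> (\<Union>y\<in>T. N y)"
    using compactE_image[OF assms(4), of C N] DN by blast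
  define R where "R = (\<Union>z\<in>T. D z \<times> N z)"
  have R: "R \<in> sets (\<nu> \<Otimes>\<^sub>M m)"
    unfolding R_def
  proof (intro sets.finite_UN[OF T(2)] ballI pair_measureI)
    fix z assume "z \<in> T"
    then show "D z \<in> sets \<nu>" "N z \<in> sets m"
      using DN[of z] T(1) inner_regular_sets[OF assms(1)] assms(2)
      by (auto simp: compact_imp_closed borel_closed borel_open)
  qed
  moreover have "R \<subseteq> W"
    unfolding R_def using DN T(1) by blast
  moreover have "\<forall>y\<in>C. c \<le> emeasure \<nu> {x. (x, y) \<in> R}"
  proof
    fix y assume y: "y \<in> C"
    obtain z where z: "z \<in> T" "y \<in> N z"
      using T(3) y by auto
    then have "c \<le> emeasure \<nu> (D z)"
      using DN[of z] T(1) by (auto intro: less_imp_le)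
    also have "\<dots> \<le> emeasure \<nu> {x. (x, y) \<in> R}"
      using z sets_Pair2[OF R, of y] by (intro emeasure_mono) (auto simp: R_def vimage_def)
    finally show "c \<le> emeasure \<nu> {x. (x, y) \<in> R}" .
  qed
  ultimately show thesis
    by (rule that)
qed

lemma sum_mult_emeasure_le_nn_integral:
  fixes a :: "'i \<Rightarrow> ennreal"
  assumes "finite V" "disjoint_family_on C V" "\<And>v. v \<in> V \<Longrightarrow> C v \<in> sets M"
    and "\<And>v y. v \<in> V \<Longrightarrow> y \<in> C v \<Longrightarrow> a v \<le> f y"
  shows "(\<Sum>v\<in>V. a v * emeasure M (C v)) \<le> (\<integral>\<^sup>+y. f y \<partial>M)"
proof -
  have "(\<Sum>v\<in>V. a v * emeasure M (C v)) = (\<integral>\<^sup>+y. (\<Sum>v\<in>V. a v * indicator (C v) y) \<partial>M)"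
    using assms(3) by (subst nn_integral_sum) (auto simp: nn_integral_cmult_indicator)
  also have "\<dots> \<le> (\<integral>\<^sup>+y. f y \<partial>M)"
  proof (rule nn_integral_mono)
    fix y
    show "(\<Sum>v\<in>V. a v * indicator (C v) y) \<le> f y"
    proof (cases "\<exists>v\<in>V. y \<in> C v")
      case True
      then obtain v where v: "v \<in> V" "y \<in> C v" by blast
      then show ?thesis
        by (simp add: sum_indicator_disjoint_family[OF assms(2) v(2) assms(1) v(1)] assms(4))
    next
      case False
      then show ?thesis by (simp add: indicator_def)
    qed
  qed
  finally show ?thesis .
qed

lemma ennreal_mult_le_shifted:
  fixes r a b \<epsilon> B :: real
  assumes "0 \<le> r" "0 \<le> a" "a \<le> b + \<epsilon>" "0 \<le> b" "b \<le> B" "0 < \<epsilon>"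
  shows "ennreal r * ennreal a \<le> ennreal (r - \<epsilon>) * ennreal b + ennreal (\<epsilon> * (r + B))"
proof (cases "\<epsilon> \<le> r")
  case True
  have "r * a \<le> (r - \<epsilon>) * b + \<epsilon> * (r + B)"
    using mult_left_mono[OF assms(3,1)] mult_left_mono[OF assms(5) less_imp_le[OF assms(6)]]
    by (simp only: algebra_simps)
  then show ?thesis
    using True assms by (simp add: ennreal_mult[symmetric] ennreal_plus[symmetric] ennreal_leI
        del: ennreal_plus ennreal_mult')
next
  case False
  have "r * a \<le> \<epsilon> * (r + B)"
    using assms mult_left_mono[OF assms(3,1)] mult_right_mono[OF _ assms(4), of r \<epsilon>] False
      mult_left_mono[OF assms(5) less_imp_le[OF assms(6)]]
    by (simp only: algebra_simps) linarith
  moreover have "ennreal (r - \<epsilon>) = 0"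
    using False by (simp add: ennreal_eq_0_iff)
  ultimately show ?thesis
    using assms by (simp add: ennreal_mult[symmetric] ennreal_leI del: ennreal_mult')
qed

lemma inner_regular_level_tube:
  fixes \<nu> :: "'a::t2_space measure" and m :: "'b::t2_space measure"
  assumes "finite_measure m" "inner_regular \<nu>" "inner_regular m" "open W" "E \<in> sets m"
    and "\<forall>y\<in>E. ennreal v \<le> emeasure \<nu> {x. (x, y) \<in> W}" "0 \<le> v" "\<epsilon> > 0"
  shows "\<exists>C R. C \<in> sets m \<and> C \<subseteq> E \<and> R \<in> sets (\<nu> \<Otimes>\<^sub>M m) \<and> R \<subseteq> W \<and>
    (\<forall>y\<in>C. ennreal (v - \<epsilon>) \<le> emeasure \<nu> {x. (x, y) \<in> R}) \<and>
    ennreal v * emeasure m E \<le> ennreal (v - \<epsilon>) * emeasure m C + ennreal (\<epsilon> * (v + measure m (space m)))"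
proof -
  interpret finite_measure m by fact
  have sets: "sets m = sets borel"
    by (rule inner_regular_sets[OF assms(3)])
  then have "E \<in> sets borel"
    using assms(5) by simp
  then obtain C where C: "compact C" "C \<subseteq> E" "measure m E \<le> measure m C + \<epsilon>"
    by (rule inner_regular_approx[OF assms(1,3) _ assms(8)])
  have "C \<in> sets m"
    using C(1) sets by (simp add: compact_imp_closed borel_closed)
  then have estimate: "ennreal v * emeasure m E
      \<le> ennreal (v - \<epsilon>) * emeasure m C + ennreal (\<epsilon> * (v + measure m (space m)))"
    using C(3) assms(7,8) bounded_measure[of C]
    by (simp add: emeasure_eq_measure ennreal_mult_le_shifted)
  obtain R where R: "R \<in> sets (\<nu> \<Otimes>\<^sub>M m)" "R \<subseteq> W"
    "\<forall>y\<in>C. ennreal (v - \<epsilon>) \<le> emeasure \<nu> {x. (x, y) \<in> R}"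
  proof (cases "v \<le> \<epsilon>")
    case True
    then show thesis
      by (intro that[of "{}"]) (auto simp: ennreal_eq_0_iff)
  next
    case False
    have "\<forall>y\<in>C. ennreal (v - \<epsilon>) < emeasure \<nu> {x. (x, y) \<in> W}"
      using assms(6) C(2) False assms(8) ennreal_lessI[of v "v - \<epsilon>"] by (auto intro: order_less_le_trans)
    then show thesis
      by (rule inner_regular_compact_tube[OF assms(2) sets assms(4) C(1)]) (rule that)
  qed
  show ?thesis
    by (intro exI[of _ C] exI[of _ R] conjI \<open>C \<in> sets m\<close> C(2) R estimate)
qed

lemma sum_mult_emeasure_le_pair_measure:
  fixes a :: "'i \<Rightarrow> ennreal"
  assumes "finite_measure \<nu>" "finite_measure m" "finite V" "disjoint_family_on C V"
    and "\<And>v. v \<in> V \<Longrightarrow> C v \<in> sets m" "\<And>v. v \<in> V \<Longrightarrow> R v \<in> sets (\<nu> \<Otimes>\<^sub>M m)"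
    and "\<And>v. v \<in> V \<Longrightarrow> \<forall>y\<in>C v. a v \<le> emeasure \<nu> {x. (x, y) \<in> R v}"
  shows "(\<Sum>v\<in>V. a v * emeasure m (C v)) \<le> emeasure (\<nu> \<Otimes>\<^sub>M m) (\<Union>v\<in>V. R v)"
proof -
  interpret pair_sigma_finite \<nu> m
    using assms(1,2) by (simp add: pair_sigma_finite_def finite_measure_def)
  have R: "(\<Union>v\<in>V. R v) \<in> sets (\<nu> \<Otimes>\<^sub>M m)"
    using assms(3,6) by auto
  have "(\<Sum>v\<in>V. a v * emeasure m (C v)) \<le> (\<integral>\<^sup>+y. emeasure \<nu> {x. (x, y) \<in> (\<Union>v\<in>V. R v)} \<partial>m)"
  proof (rule sum_mult_emeasure_le_nn_integral[OF assms(3,4,5)])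
    fix v y assume v: "v \<in> V" and y: "y \<in> C v"
    have "a v \<le> emeasure \<nu> {x. (x, y) \<in> R v}"
      using assms(7)[OF v] y by blast
    also have "\<dots> \<le> emeasure \<nu> {x. (x, y) \<in> (\<Union>v\<in>V. R v)}"
      using v sets_Pair2[OF R, of y] by (intro emeasure_mono) (auto simp: vimage_def)
    finally show "a v \<le> emeasure \<nu> {x. (x, y) \<in> (\<Union>v\<in>V. R v)}" .
  qed
  also have "\<dots> = emeasure (\<nu> \<Otimes>\<^sub>M m) (\<Union>v\<in>V. R v)"
    using emeasure_pair_measure_alt2[OF R] by (simp add: vimage_def)
  finally show ?thesis .
qed

lemma simple_function_below_slices:
  fixes \<nu> :: "'a::t2_space measure" and m :: "'b::t2_space measure"
  assumes "finite_measure \<nu>" "finite_measure m" "inner_regular \<nu>" "inner_regular m" "open W"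
    and u: "simple_function m u" "\<And>y. u y \<le> emeasure \<nu> {x. (x, y) \<in> W}" "\<And>y. u y < top"
    and "e > 0"
  obtains R where "R \<in> sets (\<nu> \<Otimes>\<^sub>M m)" "R \<subseteq> W"
    "integral\<^sup>S m u \<le> emeasure (\<nu> \<Otimes>\<^sub>M m) R + ennreal e"
proof -
  define V where "V = u ` space m"
  define E where "E v = u -` {v} \<inter> space m" for v
  define S where "S = (\<Sum>v\<in>V. enn2real v + measure m (space m))"
  define \<epsilon> where "\<epsilon> = e / (S + 1)"
  have V: "finite V" "\<And>v. v \<in> V \<Longrightarrow> ennreal (enn2real v) = v"
    using u(1,3) by (auto simp: V_def simple_function_def less_top)
  have E: "\<And>v. E v \<in> sets m" "disjoint_family_on E V"
    using u(1) by (auto simp: E_def disjoint_family_on_def intro: simple_functionD)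
  have "0 \<le> S"
    by (auto simp: S_def intro: sum_nonneg)
  then have \<epsilon>: "\<epsilon> > 0" "\<epsilon> * S \<le> e"
    using \<open>e > 0\<close> by (auto simp: \<epsilon>_def field_simps)
  have level: "\<forall>y\<in>E v. ennreal (enn2real v) \<le> emeasure \<nu> {x. (x, y) \<in> W}" if "v \<in> V" for v
    using u(2) V(2)[OF that] by (auto simp: E_def)
  define good where "good v C R \<longleftrightarrow> C \<in> sets m \<and> C \<subseteq> E v \<and> R \<in> sets (\<nu> \<Otimes>\<^sub>M m) \<and> R \<subseteq> W \<and>
      (\<forall>y\<in>C. ennreal (enn2real v - \<epsilon>) \<le> emeasure \<nu> {x. (x, y) \<in> R}) \<and>
      ennreal (enn2real v) * emeasure m (E v) \<le> ennreal (enn2real v - \<epsilon>) * emeasure m C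
        + ennreal (\<epsilon> * (enn2real v + measure m (space m)))" for v C R
  have "\<exists>C R. good v C R" if "v \<in> V" for v
    unfolding good_def
    by (rule inner_regular_level_tube[OF assms(2-5) E(1) level[OF that] enn2real_nonneg \<epsilon>(1)])
  then obtain C R where "\<And>v. v \<in> V \<Longrightarrow> good v (C v) (R v)"
    by metis
  then have C: "C v \<in> sets m" "C v \<subseteq> E v"
    and R: "R v \<in> sets (\<nu> \<Otimes>\<^sub>M m)" "R v \<subseteq> W"
      "\<forall>y\<in>C v. ennreal (enn2real v - \<epsilon>) \<le> emeasure \<nu> {x. (x, y) \<in> R v}"
    and estimate: "ennreal (enn2real v) * emeasure m (E v) \<le> ennreal (enn2real v - \<epsilon>) * emeasure m (C v)
      + ennreal (\<epsilon> * (enn2real v + measure m (space m)))" if "v \<in> V" for v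
    using that unfolding good_def by simp_all
  have "disjoint_family_on C V"
    by (rule disjoint_family_on_bisimulation[OF E(2)]) (use C(2) in blast)
  then have levels_le: "(\<Sum>v\<in>V. ennreal (enn2real v - \<epsilon>) * emeasure m (C v)) \<le> emeasure (\<nu> \<Otimes>\<^sub>M m) (\<Union>v\<in>V. R v)"
    by (rule sum_mult_emeasure_le_pair_measure[OF assms(1,2) V(1) _ C(1) R(1,3)])
  have "integral\<^sup>S m u = (\<Sum>v\<in>V. ennreal (enn2real v) * emeasure m (E v))"
    using V(2) by (simp add: simple_integral_def V_def E_def)
  also have "\<dots> \<le> (\<Sum>v\<in>V. ennreal (enn2real v - \<epsilon>) * emeasure m (C v)
      + ennreal (\<epsilon> * (enn2real v + measure m (space m))))"
    using estimate by (rule sum_mono)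
  also have "\<dots> = (\<Sum>v\<in>V. ennreal (enn2real v - \<epsilon>) * emeasure m (C v)) + ennreal (\<epsilon> * S)"
    using \<epsilon>(1) by (subst sum.distrib) (simp add: S_def sum_distrib_left)
  also have "\<dots> \<le> emeasure (\<nu> \<Otimes>\<^sub>M m) (\<Union>v\<in>V. R v) + ennreal e"
    using levels_le ennreal_leI[OF \<epsilon>(2)] by (rule add_mono)
  finally show thesis
    using R(1,2) V(1) by (intro that) auto
qed

text \<open>A substitute for Tonelli's theorem, as W need not belong to the product sigma-algebra.\<close>

lemma nn_integral_slices_le:
  fixes \<nu> :: "'a::t2_space measure" and m :: "'b::t2_space measure"
  assumes "finite_measure \<nu>" "finite_measure m" "inner_regular \<nu>" "inner_regular m" "open W"
    and bound: "\<And>R. R \<in> sets (\<nu> \<Otimes>\<^sub>M m) \<Longrightarrow> R \<subseteq> W \<Longrightarrow> emeasure (\<nu> \<Otimes>\<^sub>M m) R \<le> B"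
  shows "(\<integral>\<^sup>+y. emeasure \<nu> {x. (x, y) \<in> W} \<partial>m) \<le> B"
  unfolding nn_integral_def_finite
proof (rule SUP_least, clarify)
  fix u assume u: "simple_function m u" "u \<le> (\<lambda>y. emeasure \<nu> {x. (x, y) \<in> W})" "\<forall>y. u y < top"
  have u_le: "u y \<le> emeasure \<nu> {x. (x, y) \<in> W}" and u_fin: "u y < top" for y
    using u(2,3) by (auto simp: le_fun_def)
  show "integral\<^sup>S m u \<le> B"
  proof (rule ennreal_le_epsilon)
    fix e :: real assume "B < top" "0 < e"
    obtain R where R: "R \<in> sets (\<nu> \<Otimes>\<^sub>M m)" "R \<subseteq> W"
      and approx: "integral\<^sup>S m u \<le> emeasure (\<nu> \<Otimes>\<^sub>M m) R + ennreal e"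
      by (rule simple_function_below_slices[OF assms(1-5) u(1) u_le u_fin \<open>0 < e\<close>])
    show "integral\<^sup>S m u \<le> B + ennreal e"
      using approx add_right_mono[OF bound[OF R]] by (rule order_trans)
  qed
qed

section \<open>Translates, convolutions and the Haar measure\<close>

lemma sets_borel_translate_preimage:
  fixes A :: "'g::{topological_group_add, t2_space} set"
  assumes "A \<in> sets borel"
  shows "{s. -s + t \<in> A} \<in> sets borel" "{t. -s + t \<in> A} \<in> sets borel"
proof -
  have "(\<lambda>s. -s + t) \<in> borel_measurable borel" "(\<lambda>t. -s + t) \<in> borel_measurable borel"
    by (intro borel_measurable_continuous_onI continuous_intros)+
  from measurable_sets_borel[OF this(1) assms] measurable_sets_borel[OF this(2) assms]
  show "{s. -s + t \<in> A} \<in> sets borel" "{t. -s + t \<in> A} \<in> sets borel"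
    by (simp_all add: vimage_def)
qed

lemma open_translate_pairs:
  fixes U :: "'g::{topological_group_add, t2_space} set"
  assumes "open U"
  shows "open {(s, t). -s + t \<in> U}" "open {(t, s). -s + t \<in> U}"
proof -
  have "open ((\<lambda>p. -fst p + snd p) -` U)" "open ((\<lambda>p. -snd p + fst p) -` U)"
    using assms by (auto intro!: continuous_open_vimage continuous_intros)
  then show "open {(s, t). -s + t \<in> U}" "open {(t, s). -s + t \<in> U}"
    by (simp_all add: vimage_def case_prod_unfold)
qed

lemma conv_indicator_eq:
  "conv_indicator M h A t = (\<integral>s. indicator {s. -s + t \<in> A} s *\<^sub>R h s \<partial>M)"
  unfolding conv_indicator_def by (intro Bochner_Integration.integral_cong) (auto simp: indicator_def)

lemma norm_conv_indicator_le:
  fixes M :: "'g::{topological_group_add, t2_space} measure"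
  assumes "sets M = sets borel" "integrable M h" "A \<in> sets borel"
  shows "ennreal (cmod (conv_indicator M h A t))
    \<le> emeasure (density M (\<lambda>s. ennreal (cmod (h s)))) {s. -s + t \<in> A}"
proof -
  define S where "S = {s. -s + t \<in> A}"
  have S: "S \<in> sets M"
    using sets_borel_translate_preimage(1)[OF assms(3)] assms(1) by (simp add: S_def)
  have "ennreal (cmod (conv_indicator M h A t)) \<le> (\<integral>\<^sup>+s. ennreal (norm (indicator S s *\<^sub>R h s)) \<partial>M)"
    unfolding conv_indicator_eq S_def[symmetric]
    by (rule integral_norm_bound_ennreal[OF integrable_mult_indicator[OF S assms(2)]])
  also have "\<dots> = (\<integral>\<^sup>+s. ennreal (cmod (h s)) * indicator S s \<partial>M)"
    by (intro nn_integral_cong) (auto simp: indicator_def)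
  also have "\<dots> = emeasure (density M (\<lambda>s. ennreal (cmod (h s)))) S"
    using S assms(2) by (simp add: emeasure_density)
  finally show ?thesis
    unfolding S_def .
qed

lemma Re_mult_conv_indicator:
  fixes M :: "'g::{topological_group_add, t2_space} measure"
  assumes "sets M = sets borel" "integrable M h" "A \<in> sets borel"
  shows "Re (c * conv_indicator M h A t) = (\<integral>s. indicator A (-s + t) * Re (c * h s) \<partial>M)"
proof -
  have S: "{s. -s + t \<in> A} \<in> sets M"
    using sets_borel_translate_preimage(1)[OF assms(3)] assms(1) by simp
  have "Re (c * conv_indicator M h A t) = Re (\<integral>s. c * (indicator {s. -s + t \<in> A} s *\<^sub>R h s) \<partial>M)"
    by (simp only: conv_indicator_eq integral_mult_right_zero)
  also have "\<dots> = (\<integral>s. Re (c * (indicator {s. -s + t \<in> A} s *\<^sub>R h s)) \<partial>M)"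
    using integrable_mult_indicator[OF S assms(2)] by (intro integral_Re[symmetric] integrable_mult_right)
  also have "\<dots> = (\<integral>s. indicator A (-s + t) * Re (c * h s) \<partial>M)"
    by (intro Bochner_Integration.integral_cong) (auto simp: indicator_def)
  finally show ?thesis .
qed

lemma young_function_le_linear:
  assumes "young_function \<Phi>" "0 \<le> x" "x \<le> H" "0 < k"
  shows "\<Phi> (x / k) \<le> x / H * \<Phi> (H / k)"
proof (cases "H = 0")
  case True
  then show ?thesis
    using assms by (simp add: young_function_def)
next
  case False
  have convex: "convex_on {0..} \<Phi>" and "\<Phi> 0 = 0"
    using assms(1) by (auto simp: young_function_def)
  have "\<Phi> ((1 - x / H) *\<^sub>R 0 + (x / H) *\<^sub>R (H / k)) \<le> (1 - x / H) * \<Phi> 0 + x / H * \<Phi> (H / k)"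
    using assms(2-4) False by (intro convex_onD[OF convex]) auto
  then show ?thesis
    using \<open>\<Phi> 0 = 0\<close> False by simp
qed

lemma luxemburg_norm_le:
  assumes "k > 0" "(\<integral>\<^sup>+x. ennreal (\<Phi> (cmod (f x) / k)) \<partial>m) \<le> 1"
  shows "luxemburg_norm \<Phi> m f \<le> k"
  unfolding luxemburg_norm_def using assms by (intro cInf_lower) (auto intro: bdd_belowI[of _ 0])

lemma integral_indicator_eq_density_diff:
  fixes g :: "'a \<Rightarrow> real"
  assumes "integrable M g" "S \<in> sets M"
  shows "(\<integral>s. indicator S s * g s \<partial>M)
    = measure (density M (\<lambda>s. ennreal (g s))) S - measure (density M (\<lambda>s. ennreal (- g s))) S"
proof -
  have "integrable M (\<lambda>s. indicator S s * g s)"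
    using integrable_real_mult_indicator[OF assms(2,1)] by (simp add: mult.commute)
  then have "(\<integral>s. indicator S s * g s \<partial>M) = enn2real (\<integral>\<^sup>+s. ennreal (indicator S s * g s) \<partial>M)
      - enn2real (\<integral>\<^sup>+s. ennreal (- (indicator S s * g s)) \<partial>M)"
    by (rule real_lebesgue_integral_def)
  also have "(\<integral>\<^sup>+s. ennreal (indicator S s * g s) \<partial>M) = emeasure (density M (\<lambda>s. ennreal (g s))) S"
    using assms by (subst emeasure_density) (auto intro!: nn_integral_cong simp: indicator_def)
  also have "(\<integral>\<^sup>+s. ennreal (- (indicator S s * g s)) \<partial>M) = emeasure (density M (\<lambda>s. ennreal (- g s))) S"
    using assms by (subst emeasure_density) (auto intro!: nn_integral_cong simp: indicator_def)
  finally show ?thesis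
    by (simp add: measure_def)
qed

locale compact_haar =
  fixes m :: "'g::{topological_group_add, t2_space} measure"
  assumes compact_UNIV: "compact (UNIV :: 'g set)"
    and normalized_haar: "normalized_haar m"
begin

lemma finite_measure_haar: "finite_measure m"
  using normalized_haar by (intro finite_measureI) (simp add: normalized_haar_def)

sublocale finite_measure m
  by (rule finite_measure_haar)

lemma sets_haar: "sets m = sets borel"
  using normalized_haar by (simp add: normalized_haar_def regular_borel_def)

lemma space_haar: "space m = UNIV"
  using sets_eq_imp_space_eq[OF sets_haar] by simp

lemma emeasure_haar_outer:
  "A \<in> sets borel \<Longrightarrow> emeasure m A = (INF U\<in>{U. open U \<and> A \<subseteq> U}. emeasure m U)"
  using normalized_haar by (simp add: normalized_haar_def regular_borel_def)

lemma inner_regular_haar: "inner_regular m"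
  using normalized_haar
  by (intro regular_borel_imp_inner_regular[OF compact_UNIV finite_measure_haar]) (simp add: normalized_haar_def)

lemma emeasure_haar_translate:
  assumes "A \<in> sets borel"
  shows "emeasure m {t. -s + t \<in> A} = emeasure m A"
proof -
  have "{t. -s + t \<in> A} = (\<lambda>y. s + y) ` A"
    by (auto simp: image_iff) (metis add_minus_cancel)
  then show ?thesis
    using normalized_haar assms by (simp add: normalized_haar_def)
qed

lemma translates_borel_measurable:
  assumes "inner_regular \<nu>" "open U"
  shows "(\<lambda>t. emeasure \<nu> {s. -s + t \<in> U}) \<in> borel_measurable m"
  using emeasure_slice_borel_measurable[OF assms(1) open_translate_pairs(1)[OF assms(2)] sets_haar]
  by simp

lemma nn_integral_translates_open:
  assumes "finite_measure \<nu>" "inner_regular \<nu>" "open U"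
  shows "(\<integral>\<^sup>+t. emeasure \<nu> {s. -s + t \<in> U} \<partial>m) = emeasure \<nu> (space \<nu>) * emeasure m U"
proof (rule antisym)
  interpret N: finite_measure \<nu> by fact
  have U: "U \<in> sets borel"
    using assms(3) by (rule borel_open)
  have "(\<integral>\<^sup>+t. emeasure \<nu> {s. (s, t) \<in> {(s, t). -s + t \<in> U}} \<partial>m) \<le> emeasure \<nu> (space \<nu>) * emeasure m U"
  proof (rule nn_integral_slices_le[OF assms(1) finite_measure_haar assms(2) inner_regular_haar
        open_translate_pairs(1)[OF assms(3)]])
    fix R assume R: "R \<in> sets (\<nu> \<Otimes>\<^sub>M m)" "R \<subseteq> {(s, t). -s + t \<in> U}"
    have "emeasure (\<nu> \<Otimes>\<^sub>M m) R = (\<integral>\<^sup>+s. emeasure m (Pair s -` R) \<partial>\<nu>)"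
      by (rule emeasure_pair_measure_alt[OF R(1)])
    also have "\<dots> \<le> (\<integral>\<^sup>+s. emeasure m {t. -s + t \<in> U} \<partial>\<nu>)"
      using R(2) sets_borel_translate_preimage(2)[OF U] sets_haar
      by (intro nn_integral_mono emeasure_mono) auto
    also have "\<dots> = emeasure \<nu> (space \<nu>) * emeasure m U"
      using emeasure_haar_translate[OF U] by (simp add: mult.commute)
    finally show "emeasure (\<nu> \<Otimes>\<^sub>M m) R \<le> emeasure \<nu> (space \<nu>) * emeasure m U" .
  qed
  then show "(\<integral>\<^sup>+t. emeasure \<nu> {s. -s + t \<in> U} \<partial>m) \<le> emeasure \<nu> (space \<nu>) * emeasure m U"
    by simp
  have "(\<integral>\<^sup>+s. emeasure m {t. (t, s) \<in> {(t, s). -s + t \<in> U}} \<partial>\<nu>) \<le> (\<integral>\<^sup>+t. emeasure \<nu> {s. -s + t \<in> U} \<partial>m)"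
  proof (rule nn_integral_slices_le[OF finite_measure_haar assms(1) inner_regular_haar assms(2)
        open_translate_pairs(2)[OF assms(3)]])
    fix R assume R: "R \<in> sets (m \<Otimes>\<^sub>M \<nu>)" "R \<subseteq> {(t, s). -s + t \<in> U}"
    have "emeasure (m \<Otimes>\<^sub>M \<nu>) R = (\<integral>\<^sup>+t. emeasure \<nu> (Pair t -` R) \<partial>m)"
      by (rule N.emeasure_pair_measure_alt[OF R(1)])
    also have "\<dots> \<le> (\<integral>\<^sup>+t. emeasure \<nu> {s. -s + t \<in> U} \<partial>m)"
      using R(2) sets_borel_translate_preimage(1)[OF U] inner_regular_sets[OF assms(2)]
      by (intro nn_integral_mono emeasure_mono) auto
    finally show "emeasure (m \<Otimes>\<^sub>M \<nu>) R \<le> (\<integral>\<^sup>+t. emeasure \<nu> {s. -s + t \<in> U} \<partial>m)" .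
  qed
  then show "emeasure \<nu> (space \<nu>) * emeasure m U \<le> (\<integral>\<^sup>+t. emeasure \<nu> {s. -s + t \<in> U} \<partial>m)"
    using emeasure_haar_translate[OF U] by (simp add: mult.commute)
qed

lemma nn_integral_translates_compact:
  assumes "finite_measure \<nu>" "inner_regular \<nu>" "compact K"
  shows "(\<integral>\<^sup>+t. emeasure \<nu> {s. -s + t \<in> K} \<partial>m) = emeasure \<nu> (space \<nu>) * emeasure m K"
proof -
  interpret N: finite_measure \<nu> by fact
  have U: "open (- K)" "- K \<in> sets borel" and K: "K \<in> sets borel"
    using assms(3) by (auto simp: compact_imp_closed borel_closed)
  have sets_\<nu>: "sets \<nu> = sets borel"
    using assms(2) by (rule inner_regular_sets)
  have slice: "emeasure \<nu> {s. -s + t \<in> K} = emeasure \<nu> (space \<nu>) - emeasure \<nu> {s. -s + t \<in> - K}" for t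
  proof -
    have "{s. -s + t \<in> K} = space \<nu> - {s. -s + t \<in> - K}"
      using sets_eq_imp_space_eq[OF sets_\<nu>] by auto
    then show ?thesis
      using emeasure_compl[of "{s. -s + t \<in> - K}" \<nu>] sets_borel_translate_preimage(1)[OF U(2)] sets_\<nu>
      by simp
  qed
  have "(\<integral>\<^sup>+t. emeasure \<nu> {s. -s + t \<in> K} \<partial>m)
      = (\<integral>\<^sup>+t. emeasure \<nu> (space \<nu>) \<partial>m) - (\<integral>\<^sup>+t. emeasure \<nu> {s. -s + t \<in> - K} \<partial>m)"
    unfolding slice
  proof (rule nn_integral_diff)
    show "(\<lambda>t. emeasure \<nu> {s. -s + t \<in> - K}) \<in> borel_measurable m"
      by (rule translates_borel_measurable[OF assms(2) U(1)])
    show "(\<integral>\<^sup>+t. emeasure \<nu> {s. -s + t \<in> - K} \<partial>m) \<noteq> \<infinity>"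
      unfolding nn_integral_translates_open[OF assms(1,2) U(1)]
      by (simp add: N.emeasure_eq_measure emeasure_eq_measure ennreal_mult_eq_top_iff)
    show "AE t in m. emeasure \<nu> {s. -s + t \<in> - K} \<le> emeasure \<nu> (space \<nu>)"
      by (intro AE_I2 emeasure_space)
  qed simp
  also have "\<dots> = emeasure \<nu> (space \<nu>) * (emeasure m (- K) + emeasure m K) - emeasure \<nu> (space \<nu>) * emeasure m (- K)"
    unfolding nn_integral_translates_open[OF assms(1,2) U(1)]
    using plus_emeasure[of "- K" m K] U(2) K sets_haar space_haar by simp
  also have "\<dots> = emeasure \<nu> (space \<nu>) * emeasure m K"
    by (simp add: distrib_left N.emeasure_eq_measure emeasure_eq_measure ennreal_mult_eq_top_iff)
  finally show ?thesis .
qed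

lemma modular_conv_indicator_le:
  assumes M: "finite_measure M" "inner_regular M" "integrable M h"
    and "young_function \<Phi>" "A \<in> sets borel" "open U" "A \<subseteq> U" "k > 0"
  shows "(\<integral>\<^sup>+t. ennreal (\<Phi> (cmod (conv_indicator M h A t) / k)) \<partial>m)
    \<le> ennreal (\<Phi> ((\<integral>s. cmod (h s) \<partial>M) / k)) * emeasure m U"
proof -
  define \<nu> where "\<nu> = density M (\<lambda>s. ennreal (cmod (h s)))"
  define H where "H = (\<integral>s. cmod (h s) \<partial>M)"
  define P where "P = \<Phi> (H / k)"
  have sets_M: "sets M = sets borel"
    using M(2) by (rule inner_regular_sets)
  have \<nu>: "finite_measure \<nu>" "inner_regular \<nu>" "emeasure \<nu> (space \<nu>) = ennreal H"
    using finite_inner_regular_density[OF M(1,2) integrable_norm[OF M(3)]] M(3)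
    by (simp_all add: \<nu>_def H_def emeasure_density nn_integral_eq_integral)
  have "0 \<le> H" "0 \<le> P"
    using assms(4,8) by (simp_all add: H_def P_def young_function_def)
  have "ennreal (\<Phi> (cmod (conv_indicator M h A t) / k)) \<le> ennreal (P / H) * emeasure \<nu> {s. -s + t \<in> U}" for t
  proof -
    have "ennreal (cmod (conv_indicator M h A t)) \<le> emeasure \<nu> {s. -s + t \<in> A}"
      unfolding \<nu>_def by (rule norm_conv_indicator_le[OF sets_M M(3) assms(5)])
    also have "\<dots> \<le> emeasure \<nu> {s. -s + t \<in> U}"
      using assms(6,7) sets_borel_translate_preimage(1)[OF borel_open] sets_M
      by (intro emeasure_mono) (auto simp: \<nu>_def)
    finally have bound: "ennreal (cmod (conv_indicator M h A t)) \<le> emeasure \<nu> {s. -s + t \<in> U}" .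
    then have le_H: "cmod (conv_indicator M h A t) \<le> H"
      using order_trans[OF bound emeasure_space] \<nu>(3) \<open>0 \<le> H\<close> by simp
    have "\<Phi> (cmod (conv_indicator M h A t) / k) \<le> P / H * cmod (conv_indicator M h A t)"
      using young_function_le_linear[OF assms(4) norm_ge_zero le_H assms(8)] by (simp add: P_def mult.commute)
    then have "ennreal (\<Phi> (cmod (conv_indicator M h A t) / k))
        \<le> ennreal (P / H) * ennreal (cmod (conv_indicator M h A t))"
      using \<open>0 \<le> P\<close> \<open>0 \<le> H\<close> by (simp add: ennreal_mult[symmetric] ennreal_leI del: ennreal_mult')
    also have "\<dots> \<le> ennreal (P / H) * emeasure \<nu> {s. -s + t \<in> U}"
      by (rule mult_left_mono[OF bound]) simp
    finally show ?thesis .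
  qed
  then have "(\<integral>\<^sup>+t. ennreal (\<Phi> (cmod (conv_indicator M h A t) / k)) \<partial>m)
      \<le> (\<integral>\<^sup>+t. ennreal (P / H) * emeasure \<nu> {s. -s + t \<in> U} \<partial>m)"
    by (rule nn_integral_mono)
  also have "\<dots> = ennreal (P / H) * (ennreal H * emeasure m U)"
    using translates_borel_measurable[OF \<nu>(2) assms(6)]
    by (simp add: nn_integral_cmult nn_integral_translates_open[OF \<nu>(1,2) assms(6)] \<nu>(3))
  also have "\<dots> \<le> ennreal P * emeasure m U"
    using \<open>0 \<le> P\<close> \<open>0 \<le> H\<close> by (cases "H = 0")
      (simp_all add: mult.assoc[symmetric] ennreal_mult[symmetric] del: ennreal_mult')
  finally show ?thesis
    by (simp add: P_def H_def)
qed

lemma conv_indicator_absolutely_continuous: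
  assumes "finite_measure M" "inner_regular M" "integrable M h" "young_function \<Phi>"
  shows "\<forall>\<epsilon>>0. \<exists>\<delta>>0. \<forall>A\<in>sets borel. measure m A < \<delta> \<longrightarrow>
    luxemburg_norm \<Phi> m (conv_indicator M h A) < \<epsilon>"
proof (intro allI impI)
  fix \<epsilon> :: real assume "\<epsilon> > 0"
  define k where "k = \<epsilon> / 2"
  define P where "P = \<Phi> ((\<integral>s. cmod (h s) \<partial>M) / k)"
  have "k > 0" "P \<ge> 0"
    using \<open>\<epsilon> > 0\<close> assms(4) by (auto simp: k_def P_def young_function_def)
  show "\<exists>\<delta>>0. \<forall>A\<in>sets borel. measure m A < \<delta> \<longrightarrow> luxemburg_norm \<Phi> m (conv_indicator M h A) < \<epsilon>"
  proof (intro exI[of _ "1 / (P + 1)"] conjI ballI impI)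
    show "1 / (P + 1) > 0"
      using \<open>P \<ge> 0\<close> by simp
    fix A :: "'g set" assume A: "A \<in> sets borel" "measure m A < 1 / (P + 1)"
    then have "emeasure m A < ennreal (1 / (P + 1))"
      using \<open>P \<ge> 0\<close> by (simp add: emeasure_eq_measure ennreal_lessI)
    then obtain U where U: "open U" "A \<subseteq> U" "emeasure m U < ennreal (1 / (P + 1))"
      unfolding emeasure_haar_outer[OF A(1)] by (auto simp: INF_less_iff)
    have "(\<integral>\<^sup>+t. ennreal (\<Phi> (cmod (conv_indicator M h A t) / k)) \<partial>m) \<le> ennreal P * emeasure m U"
      unfolding P_def by (rule modular_conv_indicator_le[OF assms A(1) U(1,2) \<open>k > 0\<close>])
    also have "\<dots> \<le> ennreal P * ennreal (1 / (P + 1))"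
      using U(3) by (intro mult_left_mono) auto
    also have "\<dots> \<le> 1"
      using \<open>P \<ge> 0\<close> by (simp add: ennreal_mult[symmetric] del: ennreal_mult')
    finally have "luxemburg_norm \<Phi> m (conv_indicator M h A) \<le> k"
      by (rule luxemburg_norm_le[OF \<open>k > 0\<close>])
    then show "luxemburg_norm \<Phi> m (conv_indicator M h A) < \<epsilon>"
      using \<open>\<epsilon> > 0\<close> by (simp add: k_def)
  qed
qed

lemma integral_mult_measure_eq_0_if_translates_vanish:
  fixes g :: "'g \<Rightarrow> real"
  assumes M: "finite_measure M" "inner_regular M" "integrable M g" and "compact K"
    and vanish: "AE t in m. (\<integral>s. indicator K (-s + t) * g s \<partial>M) = 0"
  shows "(\<integral>s. g s \<partial>M) * measure m K = 0"
proof -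
  define \<nu>\<^sub>p where "\<nu>\<^sub>p = density M (\<lambda>s. ennreal (g s))"
  define \<nu>\<^sub>n where "\<nu>\<^sub>n = density M (\<lambda>s. ennreal (- g s))"
  have sets_M: "sets M = sets borel"
    using M(2) by (rule inner_regular_sets)
  have \<nu>: "finite_measure \<nu>\<^sub>p" "inner_regular \<nu>\<^sub>p" "finite_measure \<nu>\<^sub>n" "inner_regular \<nu>\<^sub>n"
    unfolding \<nu>\<^sub>p_def \<nu>\<^sub>n_def using M integrable_minus[OF M(3)]
    by (auto intro: finite_inner_regular_density)
  interpret P: finite_measure \<nu>\<^sub>p by fact
  interpret N: finite_measure \<nu>\<^sub>n by fact
  have K: "K \<in> sets borel"
    using \<open>compact K\<close> by (simp add: compact_imp_closed borel_closed)
  have jordan: "(\<integral>s. indicator S s * g s \<partial>M) = measure \<nu>\<^sub>p S - measure \<nu>\<^sub>n S" if "S \<in> sets M" for S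
    unfolding \<nu>\<^sub>p_def \<nu>\<^sub>n_def by (rule integral_indicator_eq_density_diff[OF M(3) that])
  have "AE t in m. emeasure \<nu>\<^sub>p {s. -s + t \<in> K} = emeasure \<nu>\<^sub>n {s. -s + t \<in> K}"
    using vanish
  proof (rule AE_mp, intro AE_I2 impI)
    fix t assume "(\<integral>s. indicator K (-s + t) * g s \<partial>M) = 0"
    moreover have "(\<integral>s. indicator K (-s + t) * g s \<partial>M) = (\<integral>s. indicator {s. -s + t \<in> K} s * g s \<partial>M)"
      by (simp add: indicator_def)
    ultimately have "measure \<nu>\<^sub>p {s. -s + t \<in> K} = measure \<nu>\<^sub>n {s. -s + t \<in> K}"
      using jordan[of "{s. -s + t \<in> K}"] sets_borel_translate_preimage(1)[OF K] sets_M by simp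
    then show "emeasure \<nu>\<^sub>p {s. -s + t \<in> K} = emeasure \<nu>\<^sub>n {s. -s + t \<in> K}"
      by (simp add: P.emeasure_eq_measure N.emeasure_eq_measure)
  qed
  then have "emeasure \<nu>\<^sub>p (space \<nu>\<^sub>p) * emeasure m K = emeasure \<nu>\<^sub>n (space \<nu>\<^sub>n) * emeasure m K"
    by (simp add: nn_integral_translates_compact[OF \<nu>(1,2) \<open>compact K\<close>, symmetric]
        nn_integral_translates_compact[OF \<nu>(3,4) \<open>compact K\<close>, symmetric] nn_integral_cong_AE)
  then have "measure \<nu>\<^sub>p (space \<nu>\<^sub>p) * measure m K = measure \<nu>\<^sub>n (space \<nu>\<^sub>n) * measure m K"
    by (simp add: P.emeasure_eq_measure N.emeasure_eq_measure emeasure_eq_measure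
        ennreal_mult[symmetric] del: ennreal_mult')
  moreover have "(\<integral>s. g s \<partial>M) = measure \<nu>\<^sub>p (space \<nu>\<^sub>p) - measure \<nu>\<^sub>n (space \<nu>\<^sub>n)"
  proof -
    have "(\<integral>s. g s \<partial>M) = (\<integral>s. indicator (space M) s * g s \<partial>M)"
      by (intro Bochner_Integration.integral_cong) auto
    then show ?thesis
      using jordan[of "space M"] by (simp add: \<nu>\<^sub>p_def \<nu>\<^sub>n_def)
  qed
  ultimately show ?thesis
    by (simp add: left_diff_distrib)
qed

lemma emeasure_haar_eq_0_if_conv_indicator_null:
  assumes M: "finite_measure M" "inner_regular M" "integrable M h"
    and "(\<integral>s. h s \<partial>M) \<noteq> 0" "A \<in> sets borel"
    and null: "\<forall>B\<in>sets borel. B \<subseteq> A \<longrightarrow> (AE t in m. conv_indicator M h B t = 0)"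
  shows "emeasure m A = 0"
proof (rule ccontr)
  assume "emeasure m A \<noteq> 0"
  then have "0 < emeasure m A"
    by (simp add: zero_less_iff_neq_zero)
  then obtain K where K: "compact K" "K \<subseteq> A" "0 < emeasure m K"
    by (rule inner_regular_compact_gt[OF inner_regular_haar \<open>A \<in> sets borel\<close>])
  then have "K \<in> sets borel"
    by (simp add: compact_imp_closed borel_closed)
  define z where "z = (\<integral>s. h s \<partial>M)"
  \<comment> \<open>Rotate h so that its integral becomes the positive real number cmod z.\<close>
  define c where "c = cnj z / cmod z"
  have "z \<noteq> 0"
    using \<open>(\<integral>s. h s \<partial>M) \<noteq> 0\<close> by (simp add: z_def)
  then have "c * z = cmod z"
    by (simp add: c_def complex_norm_square[symmetric] power2_eq_square field_simps)
  have "(\<integral>s. Re (c * h s) \<partial>M) = Re (\<integral>s. c * h s \<partial>M)"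
    using M(3) by (intro integral_Re integrable_mult_right)
  also have "\<dots> = cmod z"
    using \<open>c * z = cmod z\<close> by (simp add: z_def)
  finally have integral_rotated: "(\<integral>s. Re (c * h s) \<partial>M) = cmod z" .
  have "AE t in m. conv_indicator M h K t = 0"
    using null K(2) \<open>K \<in> sets borel\<close> by simp
  then have "AE t in m. (\<integral>s. indicator K (-s + t) * Re (c * h s) \<partial>M) = 0"
    by (rule eventually_mono)
      (simp only: Re_mult_conv_indicator[OF inner_regular_sets[OF M(2)] M(3) \<open>K \<in> sets borel\<close>, symmetric]; simp)
  then have "(\<integral>s. Re (c * h s) \<partial>M) * measure m K = 0"
    using M(3) by (intro integral_mult_measure_eq_0_if_translates_vanish[OF M(1,2) _ K(1)]) auto
  then have "cmod z * measure m K = 0"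
    unfolding integral_rotated .
  then show False
    using K(3) \<open>z \<noteq> 0\<close> by (simp add: emeasure_eq_measure)
qed

end

theorem corollary4p6:
  fixes m M :: "'g::{topological_group_add, t2_space} measure"
    and h :: "'g \<Rightarrow> complex"
    and \<Phi> :: "real \<Rightarrow> real"
  assumes "compact (UNIV :: 'g set)"
    and "normalized_haar m"
    and "finite_measure M" and "regular_borel M"
    and "h \<in> borel_measurable M" and "integrable M h"
    and "young_function \<Phi>"
    and "delta2 (\<lambda>x. ennreal (\<Phi> x))" and "delta2 (complementary \<Phi>)"
  shows "(\<forall>\<epsilon>>0. \<exists>\<delta>>0. \<forall>A\<in>sets borel. measure m A < \<delta> \<longrightarrow>
            luxemburg_norm \<Phi> m (conv_indicator M h A) < \<epsilon>)
       \<and> ((\<integral>s. h s \<partial>M) \<noteq> 0 \<longrightarrow>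
            (\<forall>A\<in>sets borel.
               (\<forall>B\<in>sets borel. B \<subseteq> A \<longrightarrow> (AE t in m. conv_indicator M h B t = 0))
               \<longrightarrow> emeasure m A = 0))"
proof -
  interpret compact_haar m
    using assms(1,2) by unfold_locales
  have "inner_regular M"
    using assms(1,3,4) by (rule regular_borel_imp_inner_regular)
  then show ?thesis
    using conv_indicator_absolutely_continuous[OF assms(3) _ assms(6,7)]
      emeasure_haar_eq_0_if_conv_indicator_null[OF assms(3) _ assms(6)]
    by blast
qed

end
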